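(* Let $\bm X\in\mathbb{IR}^n$ and let $(f^{\rm u},f^{\rm o})_{\bm X}$ be a superposition relaxation of $f:\bm X\to\mathbb{R}$ with continuous summands, and suppose $\mathcal P^{\rm u}=\{i:\operatorname{wid}(f^{\rm u}_i(X_i))>0\}$ and $\mathcal P^{\rm o}=\{i:\operatorname{wid}(f^{\rm o}_i(X_i))>0\}$ are nonempty. Let $F=[\underline F,\overline F]\in\mathbb{IR}$ satisfy $f(\bm x)\in F$ for all $\bm x\in\bm X$. With $\theta^{\rm u}_i=\operatorname{wid}(f^{\rm u}_i(X_i))/\operatorname{wid}(f^{\rm u}(\bm X))$ and $\theta^{\rm o}_i=\operatorname{wid}(f^{\rm o}_i(X_i))/\operatorname{wid}(f^{\rm o}(\bm X))$, the summands $$f^{\rm u,ref}_i(x_i)=\max\{f^{\rm u}_i(x_i)-\underline f^{\rm u}_i(X_i)+\underline f^{\rm u}(\bm X),\underline F\}-(1-\theta^{\rm u}_i)\max\{\underline f^{\rm u}(\bm X),\underline F\},\quad i\in\mathcal P^{\rm u},$$ $$f^{\rm o,ref}_i(x_i)=\min\{f^{\rm o}_i(x_i)-\overline f^{\rm o}_i(X_i)+\overline f^{\rm o}(\bm X),\overline F\}-(1-\theta^{\rm o}_i)\min\{\overline f^{\rm o}(\bm X),\overline F\},\quad i\in\mathcal P^{\rm o},$$ with all other summands identically zero, define a superposition relaxation $(f^{\rm u,ref},f^{\rm o,ref})_{\bm X}$ of $f$ on $\bm X$.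
   Context: $\mathbb{IR}$ is the set of compact real intervals and $\mathbb{IR}^n$ the set of boxes $\bm X=X_1\times\cdots\times X_n$. A superposition relaxation of $f:\bm X\to\mathbb{R}$ on $\bm X$ is a pair of separable functions $f^{\rm u}(\bm x)=\sum_i f^{\rm u}_i(x_i)$, $f^{\rm o}(\bm x)=\sum_i f^{\rm o}_i(x_i)$ with $f^{\rm u}_i,f^{\rm o}_i:X_i\to\mathbb{R}$ and $f^{\rm u}\le f\le f^{\rm o}$ on $\bm X$. Notation: $\underline f^{\rm u}_i(X_i)=\min_{X_i}f^{\rm u}_i$, $\overline f^{\rm u}_i(X_i)=\max_{X_i}f^{\rm u}_i$, $\operatorname{wid}(f^{\rm u}_i(X_i))=\overline f^{\rm u}_i(X_i)-\underline f^{\rm u}_i(X_i)$, $\underline f^{\rm u}(\bm X)=\sum_i\underline f^{\rm u}_i(X_i)$, $\overline f^{\rm u}(\bm X)=\sum_i\overline f^{\rm u}_i(X_i)$, $\operatorname{wid}(f^{\rm u}(\bm X))=\overline f^{\rm u}(\bm X)-\underline f^{\rm u}(\bm X)$; likewise for $f^{\rm o}$. *)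

theory Defs
  imports "HOL-Analysis.Analysis"
begin

definition box_set :: "real^'n \<Rightarrow> real^'n \<Rightarrow> (real^'n) set" where
  "box_set lo hi = {x. \<forall>i. lo$i \<le> x$i \<and> x$i \<le> hi$i}"

definition comp_iv :: "real^'n \<Rightarrow> real^'n \<Rightarrow> 'n \<Rightarrow> real set" where
  "comp_iv lo hi i = {lo$i..hi$i}"

definition superpos_relax ::
  "real^'n \<Rightarrow> real^'n \<Rightarrow> (real^'n \<Rightarrow> real) \<Rightarrow> ('n \<Rightarrow> real \<Rightarrow> real) \<Rightarrow> ('n \<Rightarrow> real \<Rightarrow> real) \<Rightarrow> bool"
  where
  "superpos_relax lo hi f fu fo \<longleftrightarrow>
     (\<forall>x\<in>box_set lo hi. (\<Sum>i\<in>UNIV. fu i (x$i)) \<le> f x \<and> f x \<le> (\<Sum>i\<in>UNIV. fo i (x$i)))"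

definition smin :: "real^'n \<Rightarrow> real^'n \<Rightarrow> ('n \<Rightarrow> real \<Rightarrow> real) \<Rightarrow> 'n \<Rightarrow> real" where
  "smin lo hi g i = Inf (g i ` comp_iv lo hi i)"

definition smax :: "real^'n \<Rightarrow> real^'n \<Rightarrow> ('n \<Rightarrow> real \<Rightarrow> real) \<Rightarrow> 'n \<Rightarrow> real" where
  "smax lo hi g i = Sup (g i ` comp_iv lo hi i)"

definition swid :: "real^'n \<Rightarrow> real^'n \<Rightarrow> ('n \<Rightarrow> real \<Rightarrow> real) \<Rightarrow> 'n \<Rightarrow> real" where
  "swid lo hi g i = smax lo hi g i - smin lo hi g i"

definition tmin :: "real^'n \<Rightarrow> real^'n \<Rightarrow> ('n \<Rightarrow> real \<Rightarrow> real) \<Rightarrow> real" where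
  "tmin lo hi g = (\<Sum>i\<in>UNIV. smin lo hi g i)"

definition tmax :: "real^'n \<Rightarrow> real^'n \<Rightarrow> ('n \<Rightarrow> real \<Rightarrow> real) \<Rightarrow> real" where
  "tmax lo hi g = (\<Sum>i\<in>UNIV. smax lo hi g i)"

definition twid :: "real^'n \<Rightarrow> real^'n \<Rightarrow> ('n \<Rightarrow> real \<Rightarrow> real) \<Rightarrow> real" where
  "twid lo hi g = tmax lo hi g - tmin lo hi g"

definition posidx :: "real^'n \<Rightarrow> real^'n \<Rightarrow> ('n \<Rightarrow> real \<Rightarrow> real) \<Rightarrow> 'n set" where
  "posidx lo hi g = {i. swid lo hi g i > 0}"

definition theta :: "real^'n \<Rightarrow> real^'n \<Rightarrow> ('n \<Rightarrow> real \<Rightarrow> real) \<Rightarrow> 'n \<Rightarrow> real" where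
  "theta lo hi g i = swid lo hi g i / twid lo hi g"

definition fu_ref :: "real^'n \<Rightarrow> real^'n \<Rightarrow> ('n \<Rightarrow> real \<Rightarrow> real) \<Rightarrow> real \<Rightarrow> 'n \<Rightarrow> real \<Rightarrow> real" where
  "fu_ref lo hi fu Flo i t =
     (if i \<in> posidx lo hi fu then
        max (fu i t - smin lo hi fu i + tmin lo hi fu) Flo
        - (1 - theta lo hi fu i) * max (tmin lo hi fu) Flo
      else 0)"

definition fo_ref :: "real^'n \<Rightarrow> real^'n \<Rightarrow> ('n \<Rightarrow> real \<Rightarrow> real) \<Rightarrow> real \<Rightarrow> 'n \<Rightarrow> real \<Rightarrow> real" where
  "fo_ref lo hi fo Fhi i t =
     (if i \<in> posidx lo hi fo then
        min (fo i t - smax lo hi fo i + tmax lo hi fo) Fhi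
        - (1 - theta lo hi fo i) * min (tmax lo hi fo) Fhi
      else 0)"

end

theory Submission
  imports Defs
begin

text \<open>
  Write \<open>f\<^sup>u(x) = M + \<Sum>\<^sub>i a\<^sub>i\<close> with \<open>M = \<underline>f\<^sup>u(X)\<close> and \<open>a\<^sub>i = f\<^sup>u\<^sub>i(x\<^sub>i) - \<underline>f\<^sup>u\<^sub>i(X\<^sub>i) \<ge> 0\<close>,
  where only the indices in \<open>\<P>\<^sup>u\<close> contribute. Since the weights \<open>\<theta>\<^sup>u\<^sub>i\<close> sum to one over
  \<open>\<P>\<^sup>u\<close>, the refined under-estimator at \<open>x\<close> equals
  \<open>\<Sum>\<^sub>i max(M + a\<^sub>i, F\<^sub>l) - (|\<P>\<^sup>u| - 1) max(M, F\<^sub>l)\<close>, and by a superadditivity property of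
  \<open>max\<close> this is at most \<open>max(M + \<Sum>\<^sub>i a\<^sub>i, F\<^sub>l) = max(f\<^sup>u(x), F\<^sub>l) \<le> f(x)\<close>.
  The over-estimator is the mirror image under \<open>f \<mapsto> -f\<close>.
\<close>

lemma sum_max_add_le:
  fixes a :: "'i \<Rightarrow> real" and M F :: real
  assumes "finite P" "P \<noteq> {}" "\<forall>i\<in>P. 0 \<le> a i"
  shows "(\<Sum>i\<in>P. max (a i + M) F) \<le> (real (card P) - 1) * max M F + max (sum a P + M) F"
  using assms
proof (induction P rule: finite_ne_induct)
  case (singleton j)
  then show ?case by simp
next
  case (insert j P)
  have "0 \<le> sum a P" using insert.prems by (simp add: sum_nonneg)
  then have "max (a j + M) F + max (sum a P + M) F \<le> max M F + max (a j + sum a P + M) F"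
    using insert.prems by (simp add: max_def)
  then show ?case
    using insert by (simp add: card_insert_if algebra_simps)
qed

lemma sum_refined_le_max:
  fixes a \<theta> :: "'i \<Rightarrow> real" and M F :: real
  assumes "finite P" "P \<noteq> {}" "\<forall>i\<in>P. 0 \<le> a i" "(\<Sum>i\<in>P. \<theta> i) = 1"
  shows "(\<Sum>i\<in>P. max (a i + M) F - (1 - \<theta> i) * max M F) \<le> max (sum a P + M) F"
proof -
  have "(\<Sum>i\<in>P. (1 - \<theta> i) * max M F) = (real (card P) - 1) * max M F"
    using assms(4) by (simp add: sum_distrib_right[symmetric] sum_subtractf)
  then show ?thesis
    using sum_max_add_le[OF assms(1-3), of M F] by (simp add: sum_subtractf)
qed

lemma
  fixes g :: "'n::finite \<Rightarrow> real \<Rightarrow> real"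
  assumes "continuous_on (comp_iv lo hi i) (g i)" "t \<in> comp_iv lo hi i"
  shows smin_le_summand: "smin lo hi g i \<le> g i t"
    and summand_le_smax: "g i t \<le> smax lo hi g i"
proof -
  have "bounded (g i ` comp_iv lo hi i)"
    using assms(1) by (intro compact_imp_bounded compact_continuous_image) (simp_all add: comp_iv_def)
  then show "smin lo hi g i \<le> g i t" "g i t \<le> smax lo hi g i"
    using assms(2) unfolding smin_def smax_def
    by (auto intro: cInf_lower cSup_upper bounded_imp_bdd_below bounded_imp_bdd_above)
qed

lemma summand_eq_smin_if_notin_posidx:
  assumes "continuous_on (comp_iv lo hi i) (g i)" "t \<in> comp_iv lo hi i" "i \<notin> posidx lo hi g"
  shows "g i t = smin lo hi g i"
  using smin_le_summand[where g=g, OF assms(1,2)] summand_le_smax[where g=g, OF assms(1,2)] assms(3)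
  by (simp add: posidx_def swid_def)

lemma swid_nonneg:
  assumes "lo$i \<le> hi$i" "continuous_on (comp_iv lo hi i) (g i)"
  shows "0 \<le> swid lo hi g i"
proof -
  have "lo$i \<in> comp_iv lo hi i" using assms(1) by (simp add: comp_iv_def)
  then show ?thesis
    using smin_le_summand[where g=g, OF assms(2)] summand_le_smax[where g=g, OF assms(2)]
    by (fastforce simp: swid_def)
qed

lemma sum_theta_posidx:
  fixes lo hi :: "real^'n"
  assumes "\<forall>i. lo$i \<le> hi$i" "\<forall>i. continuous_on (comp_iv lo hi i) (g i)"
    and "posidx lo hi g \<noteq> {}"
  shows "(\<Sum>i\<in>posidx lo hi g. theta lo hi g i) = 1"
proof -
  have "twid lo hi g = (\<Sum>i\<in>UNIV. swid lo hi g i)"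
    by (simp add: twid_def tmax_def tmin_def swid_def sum_subtractf)
  also have "\<dots> = (\<Sum>i\<in>posidx lo hi g. swid lo hi g i)"
    using swid_nonneg[where g=g] assms(1,2) by (intro sum.mono_neutral_right) (auto simp: posidx_def less_le)
  finally have twid: "twid lo hi g = (\<Sum>i\<in>posidx lo hi g. swid lo hi g i)" .
  have "0 < twid lo hi g"
    unfolding twid using assms(3) by (intro sum_pos) (auto simp: posidx_def)
  then show ?thesis
    by (simp add: theta_def sum_divide_distrib[symmetric] twid)
qed

lemma sum_fu_ref_le_max:
  fixes lo hi :: "real^'n"
  assumes box: "\<forall>i. lo$i \<le> hi$i" and cont: "\<forall>i. continuous_on (comp_iv lo hi i) (fu i)"
    and P: "posidx lo hi fu \<noteq> {}" and x: "x \<in> box_set lo hi"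
  shows "(\<Sum>i\<in>UNIV. fu_ref lo hi fu Flo i (x$i)) \<le> max (\<Sum>i\<in>UNIV. fu i (x$i)) Flo"
proof -
  define a where "a i = fu i (x$i) - smin lo hi fu i" for i
  have xi: "x$i \<in> comp_iv lo hi i" for i
    using x by (simp add: box_set_def comp_iv_def)
  have a_nonneg: "\<forall>i\<in>posidx lo hi fu. 0 \<le> a i"
    using smin_le_summand[where g=fu] cont xi by (simp add: a_def)
  have "(\<Sum>i\<in>UNIV. fu i (x$i)) = (\<Sum>i\<in>UNIV. a i) + tmin lo hi fu"
    by (simp add: a_def tmin_def sum_subtractf)
  also have "(\<Sum>i\<in>UNIV. a i) = (\<Sum>i\<in>posidx lo hi fu. a i)"
    using summand_eq_smin_if_notin_posidx[where g=fu] cont xi by (intro sum.mono_neutral_right) (auto simp: a_def)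
  finally have sum_fu: "(\<Sum>i\<in>UNIV. fu i (x$i)) = (\<Sum>i\<in>posidx lo hi fu. a i) + tmin lo hi fu" .
  have "(\<Sum>i\<in>UNIV. fu_ref lo hi fu Flo i (x$i))
      = (\<Sum>i\<in>posidx lo hi fu. max (a i + tmin lo hi fu) Flo
                                 - (1 - theta lo hi fu i) * max (tmin lo hi fu) Flo)"
    by (intro sum.mono_neutral_cong_right) (auto simp: fu_ref_def a_def)
  also have "\<dots> \<le> max (\<Sum>i\<in>UNIV. fu i (x$i)) Flo"
    unfolding sum_fu
    using sum_refined_le_max[OF _ P a_nonneg sum_theta_posidx[OF box cont P]] by simp
  finally show ?thesis .
qed

lemma smin_uminus: "smin lo hi (\<lambda>i t. - g i t) i = - smax lo hi g i"
  by (simp add: smin_def smax_def Inf_real_def image_image)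

lemma smax_uminus: "smax lo hi (\<lambda>i t. - g i t) i = - smin lo hi g i"
  by (simp add: smin_def smax_def Inf_real_def image_image)

lemma posidx_uminus: "posidx lo hi (\<lambda>i t. - g i t) = posidx lo hi g"
  by (simp add: posidx_def swid_def smin_uminus smax_uminus)

lemma theta_uminus: "theta lo hi (\<lambda>i t. - g i t) i = theta lo hi g i"
  by (simp add: theta_def twid_def swid_def tmin_def tmax_def smin_uminus smax_uminus sum_negf)

lemma fo_ref_eq_uminus_fu_ref:
  "fo_ref lo hi fo Fhi i t = - fu_ref lo hi (\<lambda>i t. - fo i t) (- Fhi) i t"
proof -
  have "tmin lo hi (\<lambda>i t. - fo i t) = - tmax lo hi fo"
    by (simp add: tmin_def tmax_def smin_uminus sum_negf)
  then show ?thesis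
    by (simp add: fo_ref_def fu_ref_def posidx_uminus theta_uminus smin_uminus max_def min_def)
qed

lemma min_le_sum_fo_ref:
  fixes lo hi :: "real^'n"
  assumes box: "\<forall>i. lo$i \<le> hi$i" and cont: "\<forall>i. continuous_on (comp_iv lo hi i) (fo i)"
    and P: "posidx lo hi fo \<noteq> {}" and x: "x \<in> box_set lo hi"
  shows "min (\<Sum>i\<in>UNIV. fo i (x$i)) Fhi \<le> (\<Sum>i\<in>UNIV. fo_ref lo hi fo Fhi i (x$i))"
proof -
  have "(\<Sum>i\<in>UNIV. fu_ref lo hi (\<lambda>i t. - fo i t) (- Fhi) i (x$i))
      \<le> max (\<Sum>i\<in>UNIV. - fo i (x$i)) (- Fhi)"
    using cont P
    by (intro sum_fu_ref_le_max[OF box _ _ x]) (auto simp: posidx_uminus intro: continuous_on_minus)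
  then show ?thesis
    by (simp add: fo_ref_eq_uminus_fu_ref sum_negf flip: minus_min_eq_max)
qed

theorem corollary1:
  fixes lo hi :: "real^'n" and f :: "real^'n \<Rightarrow> real"
    and fu fo :: "'n \<Rightarrow> real \<Rightarrow> real" and Flo Fhi :: real
  assumes box: "\<forall>i. lo$i \<le> hi$i"
    and relax: "superpos_relax lo hi f fu fo"
    and cont_u: "\<forall>i. continuous_on (comp_iv lo hi i) (fu i)"
    and cont_o: "\<forall>i. continuous_on (comp_iv lo hi i) (fo i)"
    and Pu: "posidx lo hi fu \<noteq> {}"
    and Po: "posidx lo hi fo \<noteq> {}"
    and F: "Flo \<le> Fhi"
    and encl: "\<forall>x\<in>box_set lo hi. f x \<in> {Flo..Fhi}"
  shows "superpos_relax lo hi f (fu_ref lo hi fu Flo) (fo_ref lo hi fo Fhi)"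
  unfolding superpos_relax_def
proof
  fix x assume x: "x \<in> box_set lo hi"
  have "max (\<Sum>i\<in>UNIV. fu i (x$i)) Flo \<le> f x" "f x \<le> min (\<Sum>i\<in>UNIV. fo i (x$i)) Fhi"
    using relax encl x by (auto simp: superpos_relax_def)
  then show "(\<Sum>i\<in>UNIV. fu_ref lo hi fu Flo i (x$i)) \<le> f x
      \<and> f x \<le> (\<Sum>i\<in>UNIV. fo_ref lo hi fo Fhi i (x$i))"
    using sum_fu_ref_le_max[OF box cont_u Pu x, of Flo] min_le_sum_fo_ref[OF box cont_o Po x, of Fhi]
    by linarith
qed

end
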